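(* Let $\lambda>0$, $t>0$ and $n\ge 2$. Consider a Yule tree with rate $\lambda$ whose initial bifurcation occurred time $t$ before the present, conditioned on having exactly $n$ leaves at the present. Let $TL_n(t)$ be the sum of all its edge lengths and $L_n(t)=\mathbb{E}[TL_n(t)]$. Then $$L_n(t)=2t+\frac{n-2}{\lambda}\bigl(1-y(\lambda t)\bigr),\qquad y(x):=\frac{x e^{-x}}{1-e^{-x}},$$ and $y$ is strictly decreasing on $(0,\infty)$ with $\lim_{x\to 0^+}y(x)=1$ and $\lim_{x\to\infty}y(x)=0$. *)

theory Defs
  imports "HOL-Probability.Probability"
begin

text \<open>Yule (pure-birth) process started from the initial bifurcation, i.e. with 2 lineages.
  While there are k+2 lineages, the waiting time until the next split is exponential
  with rate lambda*(k+2). omega k is that holding time; the holding times are independent.\<close>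

definition yule_space :: "real \<Rightarrow> (nat \<Rightarrow> real) measure" where
  "yule_space lam = (\<Pi>\<^sub>M k\<in>(UNIV::nat set). density lborel (exponential_density (lam * (real k + 2))))"

text \<open>Number of lineages at time s after the initial bifurcation: 2 plus the number of
  splits (the m-th split happens at time omega 0 + ... + omega (m-1)) that occurred by time s.\<close>

definition yule_count :: "(nat \<Rightarrow> real) \<Rightarrow> real \<Rightarrow> nat" where
  "yule_count \<omega> s = 2 + card {m::nat. 1 \<le> m \<and> (\<Sum>k<m. \<omega> k) \<le> s}"

text \<open>Total edge length of the tree observed at time t after the initial bifurcation:
  the integral over [0,t] of the number of lineages alive.\<close>

definition yule_length :: "real \<Rightarrow> (nat \<Rightarrow> real) \<Rightarrow> real" where
  "yule_length t \<omega> = integral {0..t} (\<lambda>s. real (yule_count \<omega> s))"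

definition yule_L :: "real \<Rightarrow> nat \<Rightarrow> real \<Rightarrow> real" where
  "yule_L lam n t =
     (let M = yule_space lam; A = {\<omega> \<in> space M. yule_count \<omega> t = n}
      in (\<integral>\<omega>. yule_length t \<omega> * indicator A \<omega> \<partial>M) / measure M A)"

definition yfun :: "real \<Rightarrow> real" where
  "yfun x = x * exp (- x) / (1 - exp (- x))"

end

theory Submission
  imports Defs "HOL-Real_Asymp.Real_Asymp"
begin

(* A sample point x :: nat => real lists the holding times: x k is the time spent with
   k + 2 lineages, exponential with rate lam (k + 2).  The m-th split happens at
   S_m = x 0 + ... + x (m - 1), and the tree has m + 2 leaves at time t exactly on the event
   B_m(t) = {S_m <= t < S_(m+1)}, on which its total length is 2 t + sum_{i=1..m} (t - S_i).

   With q(v) = (1 - e^(-lam v)) / lam, D(v) = int_0^v u e^(-lam u) du, F_0 = 0 and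
   F_m = q^(m-1) D / (m-1)!, integrating out the holding times one at a time (the fundamental
   theorem of calculus for the last one, induction on m for the rest) gives

     E[(a + b sum_{i=1..m} (t - S_i)); B_m(t)] = C_m e^(-2 lam t) (a q(t)^m / m! + b F_m(t)),

   where C_m = lam^m (m+1)!.  Taking a = 1, b = 0 gives P(B_m(t)); these probabilities sum
   to 1, so almost surely exactly one B_m(t) occurs, which identifies the conditioning event
   {n leaves} with B_(n-2)(t).  Dividing the two expectations gives the closed formula.  The
   monotonicity of y follows from the sign of its derivative, its limits from asymptotic
   expansion. *)


section \<open>Exponential moments on an interval\<close>

text \<open>\<open>expint0 lam v\<close> and \<open>expint1 lam v\<close> are the integrals of \<open>exp (-lam u)\<close> and
  \<open>u * exp (-lam u)\<close> over \<open>[0, v]\<close>.\<close>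

definition expint0 :: "real \<Rightarrow> real \<Rightarrow> real" where
  "expint0 lam v = (1 - exp (- (lam * v))) / lam"

definition expint1 :: "real \<Rightarrow> real \<Rightarrow> real" where
  "expint1 lam v = (expint0 lam v - v * exp (- (lam * v))) / lam"

text \<open>The length contribution \<open>F_j\<close> of the splits after integrating out \<open>j\<close> holding times.\<close>

definition length_weight :: "real \<Rightarrow> nat \<Rightarrow> real \<Rightarrow> real" where
  "length_weight lam j v =
     (if j = 0 then 0 else expint0 lam v ^ (j - 1) * expint1 lam v / fact (j - 1))"

text \<open>The polynomial in \<open>expint0\<close> carried along the induction: \<open>\<alpha>\<close> weights the
  probability, \<open>\<beta>\<close> the length; \<open>\<sigma>\<close> collects the length of the branches already fixed.\<close>

definition weight :: "real \<Rightarrow> real \<Rightarrow> real \<Rightarrow> nat \<Rightarrow> real \<Rightarrow> real \<Rightarrow> real" where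
  "weight lam \<alpha> \<beta> j \<sigma> v =
     \<alpha> * (expint0 lam v ^ j / fact j) +
     \<beta> * (length_weight lam j v + expint0 lam v ^ j / fact j * \<sigma>)"

lemma expint0_deriv:
  "lam \<noteq> 0 \<Longrightarrow> (expint0 lam has_real_derivative exp (- (lam * v))) (at v)"
  unfolding expint0_def by (rule derivative_eq_intros refl | simp)+

lemma expint1_deriv:
  "lam \<noteq> 0 \<Longrightarrow> (expint1 lam has_real_derivative v * exp (- (lam * v))) (at v)"
  unfolding expint1_def by (rule derivative_eq_intros expint0_deriv refl | simp)+

lemma expint0_power_deriv:
  "lam \<noteq> 0 \<Longrightarrow> ((\<lambda>v. expint0 lam v ^ Suc j / fact (Suc j)) has_real_derivative
      exp (- (lam * v)) * (expint0 lam v ^ j / fact j)) (at v)"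
  by (rule derivative_eq_intros expint0_deriv refl | simp)+

lemma length_weight_deriv:
  assumes lam: "lam \<noteq> 0"
  shows "(length_weight lam (Suc j) has_real_derivative
           exp (- (lam * v)) * (length_weight lam j v + v * (expint0 lam v ^ j / fact j))) (at v)"
proof (cases j)
  case 0
  have "length_weight lam (Suc 0) = expint1 lam"
    by (simp add: fun_eq_iff length_weight_def)
  then show ?thesis
    using 0 expint1_deriv[OF lam, of v] by (simp add: length_weight_def mult.commute)
next
  case (Suc i)
  let ?q = "expint0 lam v" and ?e = "exp (- (lam * v))"
  have "((\<lambda>v. expint0 lam v ^ Suc i * expint1 lam v / fact (Suc i)) has_real_derivative
          (real (Suc i) * ?e * ?q ^ i * expint1 lam v + ?q ^ Suc i * (v * ?e)) / fact (Suc i)) (at v)"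
    by (rule DERIV_cong[OF DERIV_cdivide[OF DERIV_mult[OF
          DERIV_power[OF expint0_deriv[OF lam], where n = "Suc i"] expint1_deriv[OF lam]]]])
       (simp add: algebra_simps)
  moreover have "(real (Suc i) * ?e * ?q ^ i * expint1 lam v + ?q ^ Suc i * (v * ?e)) / fact (Suc i)
      = ?e * (?q ^ i * expint1 lam v / fact i + v * (?q ^ Suc i / fact (Suc i)))"
  proof -
    have "\<And>F k e Q D q v. (F::real) > 0 \<Longrightarrow> k > 0 \<Longrightarrow>
        (k * e * Q * D + q * Q * (v * e)) / (k * F) = e * (Q * D / F + v * (q * Q / (k * F)))"
      by (simp add: field_simps)
    moreover have "(fact (Suc i) :: real) = real (Suc i) * fact i" by simp
    ultimately show ?thesis by (simp only: power_Suc) (simp add: fact_gt_zero)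
  qed
  ultimately show ?thesis
    using Suc by (simp add: length_weight_def[abs_def])
qed

lemma weight_deriv:
  assumes "lam \<noteq> 0"
  shows "(weight lam \<alpha> \<beta> (Suc j) \<sigma> has_real_derivative
           exp (- (lam * v)) * weight lam \<alpha> \<beta> j (v + \<sigma>) v) (at v)"
  unfolding weight_def[abs_def]
  by (rule DERIV_cong[OF DERIV_add[OF DERIV_cmult[OF expint0_power_deriv[OF assms]]
        DERIV_cmult[OF DERIV_add[OF length_weight_deriv[OF assms]
        DERIV_cmult_right[OF expint0_power_deriv[OF assms]]]]]])
     (simp add: field_simps)

lemma weight_Suc_0 [simp]: "weight lam \<alpha> \<beta> (Suc j) \<sigma> 0 = 0"
  by (simp add: weight_def length_weight_def expint0_def expint1_def)

lemma expint0_nonneg: "0 < lam \<Longrightarrow> 0 \<le> v \<Longrightarrow> 0 \<le> expint0 lam v"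
  by (simp add: expint0_def)

lemma expint1_nonneg:
  assumes "0 < lam" "0 \<le> v"
  shows "0 \<le> expint1 lam v"
proof -
  have "(1 + lam * v) * exp (- (lam * v)) \<le> 1"
    by (metis exp_minus_inverse exp_gt_zero exp_ge_add_one_self mult_right_mono less_imp_le)
  then show ?thesis
    using assms by (simp add: expint1_def expint0_def field_simps)
qed

lemma length_weight_nonneg: "0 < lam \<Longrightarrow> 0 \<le> v \<Longrightarrow> 0 \<le> length_weight lam j v"
  by (simp add: length_weight_def expint0_nonneg expint1_nonneg)

lemma weight_nonneg:
  "0 < lam \<Longrightarrow> 0 \<le> \<alpha> \<Longrightarrow> 0 \<le> \<beta> \<Longrightarrow> 0 \<le> \<sigma> \<Longrightarrow> 0 \<le> v \<Longrightarrow> 0 \<le> weight lam \<alpha> \<beta> j \<sigma> v"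
  by (simp add: weight_def expint0_nonneg length_weight_nonneg)

lemma weight_measurable [measurable (raw)]:
  assumes [measurable]: "f \<in> borel_measurable M" "g \<in> borel_measurable M"
  shows "(\<lambda>x. weight lam \<alpha> \<beta> j (f x) (g x)) \<in> borel_measurable M"
  unfolding weight_def[abs_def] length_weight_def[abs_def] expint1_def[abs_def] expint0_def[abs_def]
  by measurable

text \<open>Integrating out the last holding time, with rate \<open>c\<close>, over the time \<open>r\<close> still
  available; the integrand is the next stage of the induction, seen \<open>r - u\<close> before \<open>t\<close>.\<close>

lemma integral_last_holding:
  assumes lam: "0 < lam" and c: "0 < c" and r: "0 \<le> r"
    and nonneg: "0 \<le> \<alpha>" "0 \<le> \<beta>" "0 \<le> \<sigma>"
  shows "(\<integral>\<^sup>+u. ennreal (exp (- ((c + lam) * (r - u))) * weight lam \<alpha> \<beta> j (r - u + \<sigma>) (r - u))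
            * indicator {0..r} u \<partial>density lborel (\<lambda>x. ennreal (exponential_density c x)))
         = ennreal (c * (exp (- (c * r)) * weight lam \<alpha> \<beta> (Suc j) \<sigma> r))"
proof -
  define P where "P u = exp (- ((c + lam) * (r - u))) * weight lam \<alpha> \<beta> j (r - u + \<sigma>) (r - u)" for u
  define g where "g u = c * exp (- (c * u)) * P u" for u
  have P_nonneg: "0 \<le> P u" if "u \<in> {0..r}" for u
    using that lam nonneg by (simp add: P_def weight_nonneg)
  have antiderivative: "((\<lambda>u. - (c * exp (- (c * r)) * weight lam \<alpha> \<beta> (Suc j) \<sigma> (r - u)))
      has_real_derivative g u) (at u)" for u
  proof -
    have "((\<lambda>u. - (c * exp (- (c * r)) * weight lam \<alpha> \<beta> (Suc j) \<sigma> (r - u))) has_real_derivative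
        - (c * exp (- (c * r)) * (exp (- (lam * (r - u))) * weight lam \<alpha> \<beta> j (r - u + \<sigma>) (r - u) * -1))) (at u)"
      using lam by (intro DERIV_minus DERIV_cmult DERIV_chain2[OF weight_deriv])
        (auto intro!: derivative_eq_intros)
    moreover have "exp (- (c * u)) * exp (- ((c + lam) * (r - u))) = exp (- (c * r)) * exp (- (lam * (r - u)))"
      by (simp add: exp_add[symmetric] algebra_simps)
    then have "g u = c * (exp (- (c * r)) * exp (- (lam * (r - u)))) * weight lam \<alpha> \<beta> j (r - u + \<sigma>) (r - u)"
      unfolding g_def P_def by (metis mult.assoc)
    ultimately show ?thesis
      by (simp add: mult_ac)
  qed
  have "(\<integral>\<^sup>+u. ennreal (P u) * indicator {0..r} u \<partial>density lborel (\<lambda>x. ennreal (exponential_density c x)))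
      = (\<integral>\<^sup>+u. ennreal (exponential_density c u) * (ennreal (P u) * indicator {0..r} u) \<partial>lborel)"
    by (rule nn_integral_density) (auto simp: P_def)
  also have "\<dots> = (\<integral>\<^sup>+u. ennreal (g u) * indicator {0..r} u \<partial>lborel)"
    using P_nonneg c
    by (intro nn_integral_cong)
       (auto simp: g_def exponential_density_def ennreal_mult[symmetric] mult_ac split: split_indicator)
  also have "\<dots> = ennreal (- (c * exp (- (c * r)) * weight lam \<alpha> \<beta> (Suc j) \<sigma> (r - r))
                          - - (c * exp (- (c * r)) * weight lam \<alpha> \<beta> (Suc j) \<sigma> (r - 0)))"
    using P_nonneg c r antiderivative by (intro nn_integral_FTC_Icc) (auto simp: g_def P_def)
  finally show ?thesis
    by (simp add: P_def mult.assoc)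
qed


section \<open>The holding times and the split events\<close>

abbreviation holding :: "real \<Rightarrow> nat \<Rightarrow> real measure" where
  "holding lam k \<equiv> density lborel (\<lambda>x. ennreal (exponential_density (lam * (real k + 2)) x))"

lemma product_prob_space_holding: "0 < lam \<Longrightarrow> product_prob_space (holding lam)"
  by (auto simp: product_prob_space_def product_prob_space_axioms_def product_sigma_finite_def
      prob_space_exponential_density prob_space_imp_sigma_finite)

lemma space_holding_UNIV: "space (PiM UNIV (holding lam)) = UNIV"
  by (simp add: space_PiM PiE_UNIV_domain)

definition split_time :: "(nat \<Rightarrow> real) \<Rightarrow> nat \<Rightarrow> real" where
  "split_time x m = (\<Sum>k<m. x k)"

lemma coordinate_measurable [measurable]: "(\<lambda>x. x k) \<in> borel_measurable (PiM I (holding lam))"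
proof (cases "k \<in> I")
  case True
  then show ?thesis by measurable
next
  case False
  show ?thesis
    by (rule measurable_cong[where f = "\<lambda>_. undefined", THEN iffD1])
       (auto simp: space_PiM PiE_arb[OF _ False])
qed

lemma split_time_measurable [measurable]:
  "(\<lambda>x. split_time x m) \<in> borel_measurable (PiM I (holding lam))"
  unfolding split_time_def by measurable

lemma split_time_upd_le: "i \<le> m \<Longrightarrow> split_time (x(m := u)) i = split_time x i"
  unfolding split_time_def by (intro sum.cong) auto

lemma split_time_upd_Suc: "split_time (x(m := u)) (Suc m) = split_time x m + u"
  by (simp add: split_time_def split_time_upd_le[unfolded split_time_def])

lemma split_time_restrict: "m \<le> N \<Longrightarrow> split_time (restrict x {..<N}) m = split_time x m"
  unfolding split_time_def by (intro sum.cong) auto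

lemma split_time_mono: "(\<forall>k<m. 0 \<le> x k) \<Longrightarrow> i \<le> m \<Longrightarrow> split_time x i \<le> split_time x m"
  unfolding split_time_def by (intro sum_mono2) auto

definition splits_by :: "nat \<Rightarrow> real \<Rightarrow> (nat \<Rightarrow> real) set" where
  "splits_by m t = {x. (\<forall>k<m. 0 \<le> x k) \<and> split_time x m \<le> t}"

text \<open>Exactly \<open>m\<close> splits have happened by time \<open>t\<close>: the event of \<open>m + 2\<close> leaves.\<close>

definition exactly_splits :: "nat \<Rightarrow> real \<Rightarrow> (nat \<Rightarrow> real) set" where
  "exactly_splits m t =
     {x. (\<forall>k<Suc m. 0 \<le> x k) \<and> split_time x m \<le> t \<and> t < split_time x (Suc m)}"

lemma splits_by_measurable [measurable]:
  "(\<lambda>x. indicator (splits_by m t) x :: ennreal) \<in> borel_measurable (PiM I (holding lam))"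
proof -
  have "{x \<in> space (PiM I (holding lam)). x \<in> splits_by m t} \<in> sets (PiM I (holding lam))"
    unfolding splits_by_def by measurable
  then show ?thesis by (rule borel_measurable_indicator')
qed

lemma exactly_splits_sets:
  "{x \<in> space (PiM I (holding lam)). x \<in> exactly_splits m t} \<in> sets (PiM I (holding lam))"
  unfolding exactly_splits_def by measurable

lemma exactly_splits_measurable [measurable]:
  "(\<lambda>x. indicator (exactly_splits m t) x :: ennreal) \<in> borel_measurable (PiM I (holding lam))"
  using exactly_splits_sets by (rule borel_measurable_indicator')

lemma splits_by_upd:
  "x(m := u) \<in> splits_by (Suc m) t \<longleftrightarrow> x \<in> splits_by m t \<and> u \<in> {0..t - split_time x m}"
  unfolding splits_by_def by (auto simp: split_time_upd_Suc less_Suc_eq)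

lemma exactly_splits_upd:
  "x(m := u) \<in> exactly_splits m t \<longleftrightarrow> x \<in> splits_by m t \<and> u \<in> {t - split_time x m<..}"
  unfolding exactly_splits_def splits_by_def
  by (auto simp: split_time_upd_Suc split_time_upd_le less_Suc_eq)

lemma exactly_splits_restrict:
  "restrict x {..<Suc m} \<in> exactly_splits m t \<longleftrightarrow> x \<in> exactly_splits m t"
  unfolding exactly_splits_def by (simp add: split_time_restrict)

lemma exactly_splits_unique:
  assumes "x \<in> exactly_splits m t" "x \<in> exactly_splits m' t"
  shows "m = m'"
proof (rule ccontr)
  assume "m \<noteq> m'"
  then consider "m < m'" | "m' < m" by linarith
  then show False
  proof cases
    case 1
    then have "split_time x (Suc m) \<le> split_time x m'"
      using assms(2) by (intro split_time_mono) (auto simp: exactly_splits_def)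
    then show False using assms by (simp add: exactly_splits_def)
  next
    case 2
    then have "split_time x (Suc m') \<le> split_time x m"
      using assms(1) by (intro split_time_mono) (auto simp: exactly_splits_def)
    then show False using assms by (simp add: exactly_splits_def)
  qed
qed


section \<open>Integrating out the holding times\<close>

text \<open>The integrand after the holding times \<open>m, m+1, ...\<close> have been integrated out,
  \<open>j\<close> of them contributing a split before \<open>t\<close>.\<close>

definition reduced_integrand ::
    "real \<Rightarrow> real \<Rightarrow> real \<Rightarrow> nat \<Rightarrow> nat \<Rightarrow> real \<Rightarrow> (nat \<Rightarrow> real) \<Rightarrow> real" where
  "reduced_integrand lam \<alpha> \<beta> m j t x =
     exp (- (lam * (real m + 2) * (t - split_time x m))) *
     weight lam \<alpha> \<beta> j (\<Sum>i\<in>{1..m}. t - split_time x i) (t - split_time x m)"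

lemma reduced_integrand_measurable [measurable]:
  "reduced_integrand lam \<alpha> \<beta> m j t \<in> borel_measurable (PiM I (holding lam))"
  unfolding reduced_integrand_def by measurable

lemma branch_sum_nonneg:
  "x \<in> splits_by m t \<Longrightarrow> 0 \<le> (\<Sum>i\<in>{1..m}. t - split_time x i)"
  using split_time_mono[of m x] by (force simp: splits_by_def intro: sum_nonneg)

lemma integrate_holding:
  assumes lam: "0 < lam" and nonneg: "0 \<le> \<alpha>" "0 \<le> \<beta>"
  shows "(\<integral>\<^sup>+u. ennreal (reduced_integrand lam \<alpha> \<beta> (Suc m) j t (x(m := u)))
            * indicator (splits_by (Suc m) t) (x(m := u)) \<partial>holding lam m)
       = ennreal (lam * (real m + 2)) *
           (ennreal (reduced_integrand lam \<alpha> \<beta> m (Suc j) t x) * indicator (splits_by m t) x)"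
proof (cases "x \<in> splits_by m t")
  case False
  then show ?thesis by (simp add: indicator_def splits_by_upd)
next
  case True
  define c where "c = lam * (real m + 2)"
  define r where "r = t - split_time x m"
  define \<sigma> where "\<sigma> = (\<Sum>i\<in>{1..m}. t - split_time x i)"
  have "(\<Sum>i\<in>{1..Suc m}. t - split_time (x(m := u)) i) = r - u + \<sigma>" for u
    by (simp add: split_time_upd_le split_time_upd_Suc r_def \<sigma>_def)
  then have "(\<integral>\<^sup>+u. ennreal (reduced_integrand lam \<alpha> \<beta> (Suc m) j t (x(m := u)))
             * indicator (splits_by (Suc m) t) (x(m := u)) \<partial>holding lam m)
      = (\<integral>\<^sup>+u. ennreal (exp (- ((c + lam) * (r - u))) * weight lam \<alpha> \<beta> j (r - u + \<sigma>) (r - u))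
             * indicator {0..r} u \<partial>holding lam m)"
    using True
    by (intro nn_integral_cong)
       (simp add: reduced_integrand_def splits_by_upd split_time_upd_Suc c_def r_def algebra_simps
         split: split_indicator)
  also have "\<dots> = ennreal (c * (exp (- (c * r)) * weight lam \<alpha> \<beta> (Suc j) \<sigma> r))"
    unfolding c_def using True lam nonneg branch_sum_nonneg[OF True]
    by (intro integral_last_holding) (auto simp: splits_by_def r_def \<sigma>_def)
  also have "\<dots> = ennreal c * ennreal (reduced_integrand lam \<alpha> \<beta> m (Suc j) t x)"
    using lam by (simp add: ennreal_mult' c_def r_def \<sigma>_def reduced_integrand_def mult_ac)
  finally show ?thesis
    using True by (simp add: c_def)
qed

definition rate_prod :: "real \<Rightarrow> nat \<Rightarrow> real" where
  "rate_prod lam m = (\<Prod>k<m. lam * (real k + 2))"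

lemma rate_prod_closed: "rate_prod lam m = lam ^ m * fact (Suc m)"
  by (induction m) (auto simp: rate_prod_def algebra_simps)

lemma integral_splits_by:
  assumes lam: "0 < lam" and nonneg: "0 \<le> \<alpha>" "0 \<le> \<beta>"
  shows "(\<integral>\<^sup>+x. ennreal (reduced_integrand lam \<alpha> \<beta> m j t x) * indicator (splits_by m t) x
            \<partial>PiM {..<m} (holding lam))
       = ennreal (rate_prod lam m * exp (- (2 * lam * t)) * weight lam \<alpha> \<beta> (j + m) 0 t)
           * indicator {0..} t"
proof (induction m arbitrary: j)
  case 0
  show ?case
    by (simp add: PiM_empty reduced_integrand_def splits_by_def split_time_def rate_prod_def
        weight_def mult_ac split: split_indicator)
next
  case (Suc m)
  interpret product_prob_space "holding lam" "UNIV :: nat set"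
    using product_prob_space_holding[OF lam] .
  have "{..<Suc m} = insert m {..<m}" by auto
  then have "(\<integral>\<^sup>+x. ennreal (reduced_integrand lam \<alpha> \<beta> (Suc m) j t x) * indicator (splits_by (Suc m) t) x
              \<partial>PiM {..<Suc m} (holding lam))
      = (\<integral>\<^sup>+x. \<integral>\<^sup>+u. ennreal (reduced_integrand lam \<alpha> \<beta> (Suc m) j t (x(m := u)))
              * indicator (splits_by (Suc m) t) (x(m := u)) \<partial>holding lam m \<partial>PiM {..<m} (holding lam))"
    by (simp add: product_nn_integral_insert)
  also have "\<dots> = ennreal (lam * (real m + 2)) * (\<integral>\<^sup>+x. ennreal (reduced_integrand lam \<alpha> \<beta> m (Suc j) t x)
              * indicator (splits_by m t) x \<partial>PiM {..<m} (holding lam))"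
    by (simp add: integrate_holding[OF lam nonneg] nn_integral_cmult)
  also have "\<dots> = ennreal (lam * (real m + 2)) * (ennreal (rate_prod lam m * exp (- (2 * lam * t))
              * weight lam \<alpha> \<beta> (Suc j + m) 0 t) * indicator {0..} t)"
    by (simp only: Suc.IH)
  also have "\<dots> = ennreal (rate_prod lam (Suc m) * exp (- (2 * lam * t)) * weight lam \<alpha> \<beta> (j + Suc m) 0 t)
              * indicator {0..} t"
    using lam by (simp add: ennreal_mult'[symmetric] rate_prod_def mult_ac)
  finally show ?case .
qed

lemma exponential_tail:
  assumes "0 < c" "0 \<le> r"
  shows "emeasure (density lborel (\<lambda>x. ennreal (exponential_density c x))) {r<..} = ennreal (exp (- r * c))"
proof -
  let ?M = "density lborel (\<lambda>x. ennreal (exponential_density c x))"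
  interpret prob_space ?M using prob_space_exponential_density[OF assms(1)] .
  have "distributed ?M lborel (\<lambda>x. x) (exponential_density c)"
    unfolding distributed_def by (auto simp: distr_id2)
  then have "prob {x \<in> space ?M. r < x} = exp (- r * c)"
    using assms by (intro exponential_distributedD_gt)
  then show ?thesis by (simp add: emeasure_eq_measure greaterThan_def)
qed

text \<open>The last holding time only has to exceed the remaining time.\<close>

lemma integrate_final_holding:
  assumes lam: "0 < lam" and nonneg: "0 \<le> \<alpha>" "0 \<le> \<beta>"
  shows "(\<integral>\<^sup>+u. ennreal (\<alpha> + \<beta> * (\<Sum>i\<in>{1..m}. t - split_time (x(m := u)) i))
            * indicator (exactly_splits m t) (x(m := u)) \<partial>holding lam m)
       = ennreal (reduced_integrand lam \<alpha> \<beta> m 0 t x) * indicator (splits_by m t) x"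
proof (cases "x \<in> splits_by m t")
  case False
  then show ?thesis by (simp add: indicator_def exactly_splits_upd)
next
  case True
  define r where "r = t - split_time x m"
  define \<psi> where "\<psi> = \<alpha> + \<beta> * (\<Sum>i\<in>{1..m}. t - split_time x i)"
  have r: "0 \<le> r" and \<psi>: "0 \<le> \<psi>"
    using True nonneg branch_sum_nonneg[OF True] by (auto simp: r_def \<psi>_def splits_by_def)
  have "(\<integral>\<^sup>+u. ennreal (\<alpha> + \<beta> * (\<Sum>i\<in>{1..m}. t - split_time (x(m := u)) i))
            * indicator (exactly_splits m t) (x(m := u)) \<partial>holding lam m)
      = (\<integral>\<^sup>+u. ennreal \<psi> * indicator {r<..} u \<partial>holding lam m)"
    using True by (intro nn_integral_cong)
      (simp add: \<psi>_def r_def split_time_upd_le exactly_splits_upd split: split_indicator)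
  also have "\<dots> = ennreal \<psi> * ennreal (exp (- r * (lam * (real m + 2))))"
    using lam r by (simp add: nn_integral_cmult exponential_tail)
  also have "\<dots> = ennreal (reduced_integrand lam \<alpha> \<beta> m 0 t x)"
    using \<psi> by (simp add: ennreal_mult[symmetric] reduced_integrand_def weight_def length_weight_def
        \<psi>_def r_def algebra_simps)
  finally show ?thesis
    using True by simp
qed

lemma integral_exactly_splits:
  assumes lam: "0 < lam" and nonneg: "0 \<le> \<alpha>" "0 \<le> \<beta>" and t: "0 \<le> t"
  shows "(\<integral>\<^sup>+x. ennreal (\<alpha> + \<beta> * (\<Sum>i\<in>{1..m}. t - split_time x i)) * indicator (exactly_splits m t) x
            \<partial>PiM {..<Suc m} (holding lam))
       = ennreal (rate_prod lam m * exp (- (2 * lam * t)) * weight lam \<alpha> \<beta> m 0 t)"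
proof -
  interpret product_prob_space "holding lam" "UNIV :: nat set"
    using product_prob_space_holding[OF lam] .
  have "{..<Suc m} = insert m {..<m}" by auto
  then have "(\<integral>\<^sup>+x. ennreal (\<alpha> + \<beta> * (\<Sum>i\<in>{1..m}. t - split_time x i)) * indicator (exactly_splits m t) x
            \<partial>PiM {..<Suc m} (holding lam))
      = (\<integral>\<^sup>+x. \<integral>\<^sup>+u. ennreal (\<alpha> + \<beta> * (\<Sum>i\<in>{1..m}. t - split_time (x(m := u)) i))
            * indicator (exactly_splits m t) (x(m := u)) \<partial>holding lam m \<partial>PiM {..<m} (holding lam))"
    by (simp only:) (rule product_nn_integral_insert; simp)
  also have "\<dots> = (\<integral>\<^sup>+x. ennreal (reduced_integrand lam \<alpha> \<beta> m 0 t x) * indicator (splits_by m t) x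
            \<partial>PiM {..<m} (holding lam))"
    by (intro nn_integral_cong integrate_final_holding[OF lam nonneg])
  also have "\<dots> = ennreal (rate_prod lam m * exp (- (2 * lam * t)) * weight lam \<alpha> \<beta> m 0 t)"
    using t by (simp add: integral_splits_by[OF lam nonneg])
  finally show ?thesis .
qed

lemma nn_integral_restrict_finite:
  assumes lam: "0 < lam" and f: "f \<in> borel_measurable (PiM {..<N} (holding lam))"
  shows "(\<integral>\<^sup>+x. f (restrict x {..<N}) \<partial>PiM UNIV (holding lam)) = (\<integral>\<^sup>+x. f x \<partial>PiM {..<N} (holding lam))"
proof -
  interpret product_prob_space "holding lam" "UNIV :: nat set"
    using product_prob_space_holding[OF lam] .
  have "(\<integral>\<^sup>+x. f x \<partial>PiM {..<N} (holding lam))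
      = (\<integral>\<^sup>+x. f x \<partial>distr (PiM UNIV (holding lam)) (PiM {..<N} (holding lam)) (\<lambda>x. restrict x {..<N}))"
    by (simp add: distr_PiM_restrict_finite)
  also have "\<dots> = (\<integral>\<^sup>+x. f (restrict x {..<N}) \<partial>PiM UNIV (holding lam))"
    by (rule nn_integral_distr) (auto intro: measurable_restrict_subset f)
  finally show ?thesis by simp
qed

lemma integral_exactly_splits_UNIV:
  assumes lam: "0 < lam" and nonneg: "0 \<le> \<alpha>" "0 \<le> \<beta>" and t: "0 \<le> t"
  shows "(\<integral>\<^sup>+x. ennreal (\<alpha> + \<beta> * (\<Sum>i\<in>{1..m}. t - split_time x i)) * indicator (exactly_splits m t) x
            \<partial>PiM UNIV (holding lam))
       = ennreal (rate_prod lam m * exp (- (2 * lam * t)) * weight lam \<alpha> \<beta> m 0 t)"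
proof -
  let ?f = "\<lambda>x. ennreal (\<alpha> + \<beta> * (\<Sum>i\<in>{1..m}. t - split_time x i)) * indicator (exactly_splits m t) x"
  have "?f x = ?f (restrict x {..<Suc m})" for x
    by (simp add: split_time_restrict indicator_def exactly_splits_restrict)
  then have "(\<integral>\<^sup>+x. ?f x \<partial>PiM UNIV (holding lam)) = (\<integral>\<^sup>+x. ?f (restrict x {..<Suc m}) \<partial>PiM UNIV (holding lam))"
    by simp
  also have "\<dots> = (\<integral>\<^sup>+x. ?f x \<partial>PiM {..<Suc m} (holding lam))"
    by (rule nn_integral_restrict_finite[OF lam]) measurable
  finally show ?thesis
    using integral_exactly_splits[OF assms] by simp
qed

definition split_prob :: "real \<Rightarrow> real \<Rightarrow> nat \<Rightarrow> real" where
  "split_prob lam t m = rate_prod lam m * exp (- (2 * lam * t)) * (expint0 lam t ^ m / fact m)"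

lemma emeasure_exactly_splits:
  assumes "0 < lam" "0 \<le> t"
  shows "emeasure (PiM UNIV (holding lam)) {x \<in> space (PiM UNIV (holding lam)). x \<in> exactly_splits m t}
       = ennreal (split_prob lam t m)"
proof -
  have "exactly_splits m t \<in> sets (PiM UNIV (holding lam))"
    using exactly_splits_sets[of UNIV lam m t] by (simp add: space_holding_UNIV)
  then have "emeasure (PiM UNIV (holding lam)) {x \<in> space (PiM UNIV (holding lam)). x \<in> exactly_splits m t}
      = (\<integral>\<^sup>+x. ennreal (1 + 0 * (\<Sum>i\<in>{1..m}. t - split_time x i)) * indicator (exactly_splits m t) x
           \<partial>PiM UNIV (holding lam))"
    by (simp add: space_holding_UNIV)
  also have "\<dots> = ennreal (rate_prod lam m * exp (- (2 * lam * t)) * weight lam 1 0 m 0 t)"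
    using assms by (intro integral_exactly_splits_UNIV) auto
  finally show ?thesis
    by (simp add: split_prob_def weight_def)
qed

lemma split_prob_sums:
  assumes lam: "0 < lam" and t: "0 \<le> t"
  shows "split_prob lam t sums 1"
proof -
  define z where "z = 1 - exp (- (lam * t))"
  have z: "norm z < 1" using lam t by (auto simp: z_def)
  have "split_prob lam t = (\<lambda>m. exp (- (2 * lam * t)) * (of_nat (Suc m) * z ^ m))"
    using lam by (simp add: fun_eq_iff split_prob_def rate_prod_closed expint0_def z_def power_divide
        field_simps del: of_nat_Suc)
  moreover have "exp (- (2 * lam * t)) * (1 / (1 - z)\<^sup>2) = 1"
    by (simp add: z_def power2_eq_square exp_add[symmetric])
  ultimately show ?thesis
    using sums_mult[OF geometric_deriv_sums[OF z], of "exp (- (2 * lam * t))"] by simp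
qed

lemma holding_times_nonneg:
  assumes lam: "0 < lam"
  shows "AE x in PiM UNIV (holding lam). \<forall>k. 0 \<le> x k"
proof -
  interpret product_prob_space "holding lam" "UNIV :: nat set"
    using product_prob_space_holding[OF lam] .
  have "AE x in PiM UNIV (holding lam). 0 \<le> x k" for k
  proof -
    let ?N = "prod_emb UNIV (holding lam) {k} (PiE {k} (\<lambda>_. {..<0}))"
    have "emeasure (holding lam k) {..<0}
        = (\<integral>\<^sup>+x. ennreal (exponential_density (lam * (real k + 2)) x) * indicator {..<0} x \<partial>lborel)"
      by (rule emeasure_density) auto
    also have "\<dots> = (\<integral>\<^sup>+(x::real). 0 \<partial>lborel)"
      by (rule nn_integral_cong) (auto simp: exponential_density_def indicator_def)
    finally have "emeasure (holding lam k) {..<0} = 0" by simp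
    then have null: "emeasure (PiM UNIV (holding lam)) ?N = 0"
      by (subst emeasure_PiM_emb) auto
    have N_sets: "?N \<in> sets (PiM UNIV (holding lam))"
      by (intro measurable_prod_emb sets_PiM_I_finite) auto
    have "{x \<in> space (PiM UNIV (holding lam)). \<not> 0 \<le> x k} = ?N"
      by (auto simp: prod_emb_def space_holding_UNIV)
    from AE_iff_measurable[OF N_sets this] null show ?thesis ..
  qed
  then show ?thesis by (simp add: AE_all_countable)
qed

lemma exactly_splits_cover:
  assumes lam: "0 < lam" and t: "0 \<le> t"
  shows "AE x in PiM UNIV (holding lam). \<exists>m. x \<in> exactly_splits m t"
proof -
  interpret product_prob_space "holding lam" "UNIV :: nat set"
    using product_prob_space_holding[OF lam] .
  define A where "A m = {x \<in> space (PiM UNIV (holding lam)). x \<in> exactly_splits m t}" for m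
  have "disjoint_family A"
    unfolding disjoint_family_on_def A_def using exactly_splits_unique by blast
  moreover have "A m \<in> sets (PiM UNIV (holding lam))" for m
    unfolding A_def by (rule exactly_splits_sets)
  ultimately have "emeasure (PiM UNIV (holding lam)) (\<Union>m. A m) = (\<Sum>m. emeasure (PiM UNIV (holding lam)) (A m))"
    by (intro suminf_emeasure[symmetric]) auto
  also have "\<dots> = (\<Sum>m. ennreal (split_prob lam t m))"
    unfolding A_def emeasure_exactly_splits[OF lam t] ..
  also have "\<dots> = ennreal 1"
    using lam t
    by (intro suminf_ennreal_eq[OF _ split_prob_sums[OF lam t]])
       (simp add: split_prob_def rate_prod_closed expint0_nonneg)
  finally have "prob (\<Union>m. A m) = 1"
    by (simp add: emeasure_eq_measure)
  then have "AE x in PiM UNIV (holding lam). x \<in> (\<Union>m. A m)"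
    by (rule AE_prob_1)
  then show ?thesis by (auto simp: A_def)
qed


section \<open>Leaf count and tree length along a sample path\<close>

lemma yule_count_split_time: "yule_count x s = 2 + card {m. 1 \<le> m \<and> split_time x m \<le> s}"
  by (simp add: yule_count_def split_time_def)

lemma yule_count_measurable:
  "(\<lambda>p. real (yule_count (fst p) (snd p))) \<in> borel_measurable (PiM I (holding lam) \<Otimes>\<^sub>M lborel)"
proof -
  have "(\<lambda>p. card {m. 1 \<le> m \<and> split_time (fst p) m \<le> snd p})
      \<in> measurable (PiM I (holding lam) \<Otimes>\<^sub>M lborel) (count_space UNIV)"
    by measurable
  from measurable_compose[OF this, of real borel] show ?thesis
    by (simp add: yule_count_split_time)
qed

lemma yule_count_measurable_time: "(\<lambda>s. real (yule_count x s)) \<in> borel_measurable borel"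
proof -
  have "(\<lambda>s. card {m. 1 \<le> m \<and> split_time x m \<le> s}) \<in> measurable borel (count_space UNIV)"
    by measurable
  from measurable_compose[OF this, of real borel] show ?thesis
    by (simp add: yule_count_split_time)
qed

text \<open>For a nonnegative function the gauge integral over an interval agrees with the
  Lebesgue integral, also when the latter does not exist (both are then 0).\<close>

lemma integral_Icc_eq_lborel:
  fixes g :: "real \<Rightarrow> real"
  assumes meas: "(\<lambda>s. g s * indicator {a..b} s) \<in> borel_measurable borel"
    and nonneg: "\<And>s. s \<in> {a..b} \<Longrightarrow> 0 \<le> g s"
  shows "integral {a..b} g = (\<integral>s. g s * indicator {a..b} s \<partial>lborel)"
proof (cases "integrable lborel (\<lambda>s. g s * indicator {a..b} s)")
  case True
  have eq: "(\<lambda>s. g s * indicator {a..b} s) = (\<lambda>s. if s \<in> {a..b} then g s else 0)"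
    by (auto simp: indicator_def fun_eq_iff)
  from has_integral_integral_lborel[OF True]
  have "(g has_integral (\<integral>s. g s * indicator {a..b} s \<partial>lborel)) {a..b}"
    unfolding eq has_integral_restrict_UNIV by (simp add: eq)
  then show ?thesis by (rule integral_unique)
next
  case False
  have "\<not> g integrable_on {a..b}"
  proof
    assume "g integrable_on {a..b}"
    then have "g absolutely_integrable_on {a..b}"
      by (rule nonnegative_absolutely_integrable_1) (use nonneg in auto)
    then have "integrable lebesgue (\<lambda>s. indicator {a..b} s *\<^sub>R g s)"
      by (simp add: set_integrable_def)
    moreover have "(\<lambda>s. indicator {a..b} s *\<^sub>R g s) \<in> borel_measurable lborel"
      using meas by (simp add: mult.commute)
    ultimately have "integrable lborel (\<lambda>s. indicator {a..b} s *\<^sub>R g s)"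
      using integrable_completion by blast
    with False show False by (simp add: mult.commute)
  qed
  then show ?thesis
    using False by (simp add: not_integrable_integral not_integrable_integral_eq)
qed

lemma yule_length_lborel:
  "yule_length t x = (\<integral>s. real (yule_count x s) * indicator {0..t} s \<partial>lborel)"
  unfolding yule_length_def
  by (rule integral_Icc_eq_lborel) (auto intro!: borel_measurable_times yule_count_measurable_time)

lemma yule_length_nonneg: "0 \<le> yule_length t x"
  unfolding yule_length_lborel by (rule integral_nonneg_AE) auto

lemma yule_length_measurable [measurable]:
  "(\<lambda>x. yule_length t x) \<in> borel_measurable (PiM I (holding lam))"
proof -
  have "(\<lambda>p. real (yule_count (fst p) (snd p)) * indicator {0..t} (snd p))
      \<in> borel_measurable (PiM I (holding lam) \<Otimes>\<^sub>M lborel)"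
    using yule_count_measurable by measurable
  then show ?thesis
    unfolding yule_length_lborel
    by (intro lborel.borel_measurable_lebesgue_integral) (simp add: case_prod_beta')
qed

lemma yule_count_exactly_splits:
  assumes nonneg: "\<forall>k. 0 \<le> x k" and B: "x \<in> exactly_splits m t" and s: "s \<le> t"
  shows "yule_count x s = 2 + card {j\<in>{1..m}. split_time x j \<le> s}"
proof -
  have "j \<le> m" if "split_time x j \<le> s" for j
  proof (rule ccontr)
    assume "\<not> j \<le> m"
    then have "split_time x (Suc m) \<le> split_time x j"
      using nonneg by (intro split_time_mono) auto
    then show False
      using B that s by (simp add: exactly_splits_def)
  qed
  then show ?thesis
    by (auto simp: yule_count_split_time intro!: arg_cong[where f = card])
qed

lemma yule_count_at_exactly_splits:
  assumes "\<forall>k. 0 \<le> x k" and "x \<in> exactly_splits m t"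
  shows "yule_count x t = m + 2"
proof -
  have "{j\<in>{1..m}. split_time x j \<le> t} = {1..m}"
    using split_time_mono[of m x] assms by (force simp: exactly_splits_def)
  then show ?thesis
    using yule_count_exactly_splits[OF assms order_refl] by simp
qed

lemma yule_length_exactly_splits:
  assumes nonneg: "\<forall>k. 0 \<le> x k" and B: "x \<in> exactly_splits m t" and t: "0 \<le> t"
  shows "yule_length t x = 2 * t + (\<Sum>j\<in>{1..m}. t - split_time x j)"
proof -
  have S_nonneg: "0 \<le> split_time x j" for j
    using nonneg by (simp add: split_time_def sum_nonneg)
  have S_le: "split_time x j \<le> t" if "j \<le> m" for j
    using split_time_mono[of m x j] nonneg B that by (force simp: exactly_splits_def)
  have pointwise: "real (yule_count x s) * indicator {0..t} s
      = 2 * indicator {0..t} s + (\<Sum>j\<in>{1..m}. indicator {split_time x j..t} s)" for s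
  proof (cases "s \<in> {0..t}")
    case True
    have "real (card {j\<in>{1..m}. split_time x j \<le> s}) = (\<Sum>j\<in>{1..m}. if split_time x j \<le> s then 1 else 0 :: real)"
      by (simp add: sum.If_cases Int_def)
    also have "\<dots> = (\<Sum>j\<in>{1..m}. indicator {split_time x j..t} s)"
      using True by (intro sum.cong) (auto simp: indicator_def)
    finally show ?thesis
      using True yule_count_exactly_splits[OF nonneg B, of s] by simp
  next
    case False
    then show ?thesis
      using S_nonneg by (auto simp: indicator_def intro!: sum.neutral) (metis order_trans)
  qed
  have integrable: "integrable lborel (indicator {a..b} :: real \<Rightarrow> real)" for a b
    by (intro integrable_real_indicator emeasure_bounded_finite) auto
  have "yule_length t x = 2 * (\<integral>s. indicator {0..t} s \<partial>lborel)
                          + (\<Sum>j\<in>{1..m}. \<integral>s. indicator {split_time x j..t} s \<partial>lborel)"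
    unfolding yule_length_lborel pointwise
    by (simp add: integrable Bochner_Integration.integral_sum Bochner_Integration.integrable_sum)
  also have "\<dots> = 2 * t + (\<Sum>j\<in>{1..m}. t - split_time x j)"
    using t S_le by (auto intro!: sum.cong simp: measure_def)
  finally show ?thesis .
qed


section \<open>The conditional expectation\<close>

lemma yule_count_event_ae:
  assumes lam: "0 < lam" and t: "0 \<le> t"
  shows "AE x in PiM UNIV (holding lam).
           (yule_count x t = m + 2 \<longleftrightarrow> x \<in> exactly_splits m t) \<and>
           (x \<in> exactly_splits m t \<longrightarrow> yule_length t x = 2 * t + (\<Sum>j\<in>{1..m}. t - split_time x j))"
  using holding_times_nonneg[OF lam] exactly_splits_cover[OF lam t]
proof eventually_elim
  case (elim x)
  then have nonneg: "\<forall>k. 0 \<le> x k" by blast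
  from elim obtain m' where B: "x \<in> exactly_splits m' t" by blast
  have "yule_count x t = m' + 2"
    by (rule yule_count_at_exactly_splits[OF nonneg B])
  then have "yule_count x t = m + 2 \<longleftrightarrow> x \<in> exactly_splits m t"
    using B exactly_splits_unique by auto
  moreover have "x \<in> exactly_splits m t \<longrightarrow> yule_length t x = 2 * t + (\<Sum>j\<in>{1..m}. t - split_time x j)"
    using yule_length_exactly_splits[OF nonneg _ t] by blast
  ultimately show ?case ..
qed

lemma yule_count_event_sets:
  "{x \<in> space (PiM UNIV (holding lam)). yule_count x t = n} \<in> sets (PiM UNIV (holding lam))"
proof -
  have "(\<lambda>x. (x, t)) \<in> measurable (PiM UNIV (holding lam)) (PiM UNIV (holding lam) \<Otimes>\<^sub>M lborel)"
    by measurable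
  from measurable_compose[OF this yule_count_measurable]
  have [measurable]: "(\<lambda>x. real (yule_count x t)) \<in> borel_measurable (PiM UNIV (holding lam))"
    by simp
  have "{x \<in> space (PiM UNIV (holding lam)). real (yule_count x t) = real n} \<in> sets (PiM UNIV (holding lam))"
    by measurable
  then show ?thesis by simp
qed

lemma measure_leaf_event:
  assumes lam: "0 < lam" and t: "0 \<le> t"
  shows "measure (PiM UNIV (holding lam)) {x \<in> space (PiM UNIV (holding lam)). yule_count x t = m + 2}
       = split_prob lam t m"
proof -
  have "emeasure (PiM UNIV (holding lam)) {x \<in> space (PiM UNIV (holding lam)). yule_count x t = m + 2}
      = emeasure (PiM UNIV (holding lam)) {x \<in> space (PiM UNIV (holding lam)). x \<in> exactly_splits m t}"
    using yule_count_event_ae[OF lam t, of m] yule_count_event_sets exactly_splits_sets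
    by (intro emeasure_eq_AE) auto
  then show ?thesis
    using lam t by (simp add: emeasure_exactly_splits measure_def split_prob_def rate_prod_closed
        expint0_nonneg)
qed

lemma integral_length_leaf_event:
  fixes m :: nat
  assumes lam: "0 < lam" and t: "0 \<le> t"
  defines "A \<equiv> {x \<in> space (PiM UNIV (holding lam)). yule_count x t = m + 2}"
  shows "(\<integral>x. yule_length t x * indicator A x \<partial>PiM UNIV (holding lam))
       = rate_prod lam m * exp (- (2 * lam * t)) * weight lam (2 * t) 1 m 0 t"
proof -
  have "(\<integral>\<^sup>+x. ennreal (yule_length t x * indicator A x) \<partial>PiM UNIV (holding lam))
      = (\<integral>\<^sup>+x. ennreal (2 * t + 1 * (\<Sum>i\<in>{1..m}. t - split_time x i)) * indicator (exactly_splits m t) x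
           \<partial>PiM UNIV (holding lam))"
    using yule_count_event_ae[OF lam t, of m]
    by (intro nn_integral_cong_AE) (auto simp: A_def space_holding_UNIV split: split_indicator)
  also have "\<dots> = ennreal (rate_prod lam m * exp (- (2 * lam * t)) * weight lam (2 * t) 1 m 0 t)"
    using lam t by (intro integral_exactly_splits_UNIV) auto
  finally show ?thesis
    using lam t yule_count_event_sets[of lam t "m + 2"] yule_length_nonneg
    by (subst integral_eq_nn_integral)
       (auto simp: A_def rate_prod_closed weight_nonneg)
qed

lemma length_ratio:
  assumes lam: "0 < lam" and t: "0 < t"
  shows "rate_prod lam m * exp (- (2 * lam * t)) * weight lam (2 * t) 1 m 0 t / split_prob lam t m
       = 2 * t + real m / lam * (1 - yfun (lam * t))"
proof -
  have q: "0 < expint0 lam t" using lam t by (simp add: expint0_def)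
  have ratio: "length_weight lam m t / (expint0 lam t ^ m / fact m) = real m / lam * (1 - yfun (lam * t))"
  proof (cases m)
    case (Suc i)
    have "1 - exp (- (lam * t)) \<noteq> 0" using lam t by simp
    then have "expint1 lam t / expint0 lam t = (1 - yfun (lam * t)) / lam"
      using lam by (simp add: expint1_def expint0_def yfun_def field_simps)
    moreover have "length_weight lam m t / (expint0 lam t ^ m / fact m) = real m * (expint1 lam t / expint0 lam t)"
      using q Suc by (simp add: length_weight_def field_simps)
    ultimately show ?thesis by simp
  qed (simp add: length_weight_def)
  define C where "C = rate_prod lam m * exp (- (2 * lam * t))"
  define Q where "Q = expint0 lam t ^ m / fact m"
  have C: "0 < C" and Q: "0 < Q"
    using lam q by (simp_all add: C_def Q_def rate_prod_closed)
  have "rate_prod lam m * exp (- (2 * lam * t)) * weight lam (2 * t) 1 m 0 t / split_prob lam t m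
      = C * (2 * t * Q + length_weight lam m t) / (C * Q)"
    by (simp add: C_def Q_def split_prob_def weight_def)
  also have "\<dots> = 2 * t + length_weight lam m t / Q"
    using C Q by (simp add: field_simps)
  finally show ?thesis
    using ratio by (simp add: Q_def)
qed


section \<open>The function y\<close>

lemma yfun_deriv:
  assumes x: "0 < x"
  shows "(yfun has_real_derivative exp (- x) * (1 - exp (- x) - x) / (1 - exp (- x))\<^sup>2) (at x)"
proof -
  have "1 - exp (- x) \<noteq> 0" using x by simp
  then show ?thesis
    unfolding yfun_def[abs_def]
    by (auto intro!: derivative_eq_intros simp: power2_eq_square algebra_simps)
qed

text \<open>\<open>y' < 0\<close> on \<open>(0, \<infinity>)\<close> because \<open>1 - x < exp (-x)\<close> for \<open>x \<noteq> 0\<close>.\<close>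

lemma yfun_strict_antimono: "strict_antimono_on {0<..} yfun"
proof (rule monotone_onI)
  fix a b :: real
  assume ab: "a \<in> {0<..}" "b \<in> {0<..}" "a < b"
  show "yfun b < yfun a"
  proof (rule DERIV_neg_imp_decreasing[OF ab(3)])
    fix x assume "a \<le> x" "x \<le> b"
    then have x: "0 < x" using ab by auto
    have "exp (- x) * (1 - exp (- x) - x) < 0"
      using exp_minus_greater[of x] x by (intro mult_pos_neg) auto
    then have "exp (- x) * (1 - exp (- x) - x) / (1 - exp (- x))\<^sup>2 < 0"
      using x by (intro divide_neg_pos) auto
    then show "\<exists>y. (yfun has_real_derivative y) (at x) \<and> y < 0"
      using yfun_deriv[OF x] by blast
  qed
qed

lemma yfun_at_0: "(yfun \<longlongrightarrow> 1) (at_right 0)"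
  unfolding yfun_def[abs_def] by real_asymp

lemma yfun_at_top: "(yfun \<longlongrightarrow> 0) at_top"
  unfolding yfun_def[abs_def] by real_asymp


theorem theorem2:
  fixes lam t :: real and n :: nat
  assumes "lam > 0" and "t > 0" and "n \<ge> 2"
  shows "yule_L lam n t = 2 * t + (real n - 2) / lam * (1 - yfun (lam * t))
         \<and> strict_antimono_on {0<..} yfun
         \<and> (yfun \<longlongrightarrow> 1) (at_right 0)
         \<and> (yfun \<longlongrightarrow> 0) at_top"
proof (intro conjI yfun_strict_antimono yfun_at_0 yfun_at_top)
  obtain m where n: "n = m + 2" using \<open>n \<ge> 2\<close> by (metis add.commute le_Suc_ex)
  have space: "yule_space lam = PiM UNIV (holding lam)"
    by (simp add: yule_space_def)
  have lam: "0 < lam" and t: "0 \<le> t" using assms by auto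
  have "yule_L lam n t = rate_prod lam m * exp (- (2 * lam * t)) * weight lam (2 * t) 1 m 0 t
                         / split_prob lam t m"
    unfolding yule_L_def Let_def space n
      integral_length_leaf_event[OF lam t] measure_leaf_event[OF lam t] ..
  also have "\<dots> = 2 * t + real m / lam * (1 - yfun (lam * t))"
    using assms by (intro length_ratio)
  finally show "yule_L lam n t = 2 * t + (real n - 2) / lam * (1 - yfun (lam * t))"
    by (simp add: n)
qed

end
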